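(* Let $\mathcal{R}^{rsc}$ be a rich single-crossing domain and $F:\mathcal{R}^{rsc}\to\mathbb{Z}$ strategy-proof. Then $F$ is monotone, $V^F$ is continuous, and $F$ is locally strategy-proof in range.
   Context: $\mathbb{Z}=[0,\infty)\times[0,1]$; $(t',q')<(t'',q'')$ means $t'<t''$, $q'<q''$; $x\le y$ means $x=y$ or $x<y$; $\square(z)=\{x:x\le z\}$. A classical preference is a complete transitive relation $R$ on $\mathbb{Z}$ (strict part $P$, indifference $I$) strictly decreasing in $t$ for fixed $q$, strictly increasing in $q$ for fixed $t$, with closed upper and lower contour sets. Distinct classical preferences satisfy single-crossing if any indifference set of one meets any indifference set of the other in at most one point. A rich single-crossing domain $\mathcal{R}^{rsc}$ is a set of pairwise single-crossing classical preferences such that for all $x'<x''$ some member is indifferent between them. For distinct members, $R'\prec R''$ means $\square(z)\cap\{x:xR''z\}\subseteq\square(z)\cap\{x:xR'z\}$ for all $z$; $\prec$ is a linear order, $\mathcal{R}^{rsc}$ has the order topology. A mechanism $F:\mathcal{R}^{rsc}\to\mathbb{Z}$ with range $Rn(F)$ is strategy-proof if $F(R')R'F(R'')$ for all $R',R''$; monotone if $R'\prec R''$ implies $F(R')\le F(R'')$. $V^F(R)=\{z:zIF(R)\}$ is continuous if for every $R$ and every monotone sequence $R^n\to R$ (i.e. $R^n\precsim R^{n+1}$ for all $n$ or $R^{n+1}\precsim R^n$ for all $n$), $F(R^n)$ converges and $\lim F(R^n)\,I\,F(R)$. $Rn(F)$ is ordered if any two distinct elements $x',x''$ satisfy $x'<x''$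 or $x''<x'$. For ordered $Rn(F)$, two elements $x'<x''$ of $Rn(F)$ are adjacent if no $z\in Rn(F)$ satisfies $x'<z<x''$. $F$ is locally strategy-proof in range if $Rn(F)$ is ordered and for all $R',R''$ with $F(R'),F(R'')$ adjacent, $F(R')R'F(R'')$ and $F(R'')R''F(R')$. *)

theory Defs
  imports "HOL-Analysis.Analysis"
begin

type_synonym bndl = "real \<times> real"
type_synonym pref = "bndl \<Rightarrow> bndl \<Rightarrow> bool"   (* R x y  means  x R y *)

definition ZZ :: "bndl set" where
  "ZZ = {(t, q). 0 \<le> t \<and> 0 \<le> q \<and> q \<le> 1}"

definition bless :: "bndl \<Rightarrow> bndl \<Rightarrow> bool" where
  "bless x y \<longleftrightarrow> fst x < fst y \<and> snd x < snd y"

definition bleq :: "bndl \<Rightarrow> bndl \<Rightarrow> bool" where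
  "bleq x y \<longleftrightarrow> x = y \<or> bless x y"

definition box :: "bndl \<Rightarrow> bndl set" where
  "box z = {x \<in> ZZ. bleq x z}"

definition strictP :: "pref \<Rightarrow> bndl \<Rightarrow> bndl \<Rightarrow> bool" where
  "strictP R x y \<longleftrightarrow> R x y \<and> \<not> R y x"

definition indiff :: "pref \<Rightarrow> bndl \<Rightarrow> bndl \<Rightarrow> bool" where
  "indiff R x y \<longleftrightarrow> R x y \<and> R y x"

definition classical :: "pref \<Rightarrow> bool" where
  "classical R \<longleftrightarrow>
     (\<forall>x y. R x y \<longrightarrow> x \<in> ZZ \<and> y \<in> ZZ) \<and>
     (\<forall>x\<in>ZZ. \<forall>y\<in>ZZ. R x y \<or> R y x) \<and>
     (\<forall>x\<in>ZZ. \<forall>y\<in>ZZ. \<forall>z\<in>ZZ. R x y \<longrightarrow> R y z \<longrightarrow> R x z) \<and>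
     (\<forall>t t' q. (t, q) \<in> ZZ \<longrightarrow> (t', q) \<in> ZZ \<longrightarrow> t < t' \<longrightarrow> strictP R (t, q) (t', q)) \<and>
     (\<forall>t q q'. (t, q) \<in> ZZ \<longrightarrow> (t, q') \<in> ZZ \<longrightarrow> q < q' \<longrightarrow> strictP R (t, q') (t, q)) \<and>
     (\<forall>z\<in>ZZ. closed {x \<in> ZZ. R x z} \<and> closed {x \<in> ZZ. R z x})"

definition single_crossing :: "pref \<Rightarrow> pref \<Rightarrow> bool" where
  "single_crossing R1 R2 \<longleftrightarrow>
     (\<forall>z1\<in>ZZ. \<forall>z2\<in>ZZ. \<forall>x\<in>ZZ. \<forall>y\<in>ZZ.
        indiff R1 x z1 \<longrightarrow> indiff R2 x z2 \<longrightarrow> indiff R1 y z1 \<longrightarrow> indiff R2 y z2 \<longrightarrow> x = y)"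

definition rich_single_crossing :: "pref set \<Rightarrow> bool" where
  "rich_single_crossing D \<longleftrightarrow>
     (\<forall>R\<in>D. classical R) \<and>
     (\<forall>R1\<in>D. \<forall>R2\<in>D. R1 \<noteq> R2 \<longrightarrow> single_crossing R1 R2) \<and>
     (\<forall>x1\<in>ZZ. \<forall>x2\<in>ZZ. bless x1 x2 \<longrightarrow> (\<exists>R\<in>D. indiff R x1 x2))"

definition prec :: "pref \<Rightarrow> pref \<Rightarrow> bool" where
  "prec R1 R2 \<longleftrightarrow> R1 \<noteq> R2 \<and>
     (\<forall>z\<in>ZZ. box z \<inter> {x \<in> ZZ. R2 x z} \<subseteq> box z \<inter> {x \<in> ZZ. R1 x z})"

definition preceq :: "pref \<Rightarrow> pref \<Rightarrow> bool" where
  "preceq R1 R2 \<longleftrightarrow> R1 = R2 \<or> prec R1 R2"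

(* convergence in the order topology of (D, \<prec>) *)
definition order_conv :: "pref set \<Rightarrow> (nat \<Rightarrow> pref) \<Rightarrow> pref \<Rightarrow> bool" where
  "order_conv D Rs R \<longleftrightarrow>
     (\<forall>A\<in>D. prec A R \<longrightarrow> (\<exists>N. \<forall>n\<ge>N. prec A (Rs n))) \<and>
     (\<forall>B\<in>D. prec R B \<longrightarrow> (\<exists>N. \<forall>n\<ge>N. prec (Rs n) B))"

definition strategy_proof :: "pref set \<Rightarrow> (pref \<Rightarrow> bndl) \<Rightarrow> bool" where
  "strategy_proof D F \<longleftrightarrow> (\<forall>R1\<in>D. \<forall>R2\<in>D. R1 (F R1) (F R2))"

definition monotone_mech :: "pref set \<Rightarrow> (pref \<Rightarrow> bndl) \<Rightarrow> bool" where
  "monotone_mech D F \<longleftrightarrow> (\<forall>R1\<in>D. \<forall>R2\<in>D. prec R1 R2 \<longrightarrow> bleq (F R1) (F R2))"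

definition VF_continuous :: "pref set \<Rightarrow> (pref \<Rightarrow> bndl) \<Rightarrow> bool" where
  "VF_continuous D F \<longleftrightarrow>
     (\<forall>R\<in>D. \<forall>Rs. (\<forall>n. Rs n \<in> D) \<longrightarrow>
        ((\<forall>n. preceq (Rs n) (Rs (Suc n))) \<or> (\<forall>n. preceq (Rs (Suc n)) (Rs n))) \<longrightarrow>
        order_conv D Rs R \<longrightarrow>
        (\<exists>L. (\<lambda>n. F (Rs n)) \<longlonglongrightarrow> L \<and> indiff R L (F R)))"

definition ordered_range :: "pref set \<Rightarrow> (pref \<Rightarrow> bndl) \<Rightarrow> bool" where
  "ordered_range D F \<longleftrightarrow>
     (\<forall>x\<in>F ` D. \<forall>y\<in>F ` D. x \<noteq> y \<longrightarrow> bless x y \<or> bless y x)"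

definition adjacent :: "pref set \<Rightarrow> (pref \<Rightarrow> bndl) \<Rightarrow> bndl \<Rightarrow> bndl \<Rightarrow> bool" where
  "adjacent D F x y \<longleftrightarrow> x \<in> F ` D \<and> y \<in> F ` D \<and> bless x y \<and>
     \<not> (\<exists>z\<in>F ` D. bless x z \<and> bless z y)"

definition locally_sp_in_range :: "pref set \<Rightarrow> (pref \<Rightarrow> bndl) \<Rightarrow> bool" where
  "locally_sp_in_range D F \<longleftrightarrow> ordered_range D F \<and>
     (\<forall>R1\<in>D. \<forall>R2\<in>D. (adjacent D F (F R1) (F R2) \<or> adjacent D F (F R2) (F R1)) \<longrightarrow>
        R1 (F R1) (F R2) \<and> R2 (F R2) (F R1))"

end

theory Submission
  imports Defs
begin

text \<open>Single crossing forces two preferences of the domain to cross in the same direction at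
  every bundle (a connectedness argument on the bundle space), so that prec is a linear
  order in which higher preferences favour larger bundles. Strategy-proofness then orders
  F R and F R' as R and R' are ordered; local strategy-proofness in range is immediate.
  Along a monotone sequence R_n \<rightarrow> R the outcomes are monotone and bounded by F R, hence
  converge to some L, and closedness of contour sets gives R (F R) L. If R strictly preferred
  F R to L, richness would yield a preference indifferent between F R and a bundle close to L,
  which can lie neither below nor above R in prec.\<close>

lemma mem_ZZ_iff: "x \<in> ZZ \<longleftrightarrow> 0 \<le> fst x \<and> 0 \<le> snd x \<and> snd x \<le> 1"
  unfolding ZZ_def by (cases x) auto

lemma closed_ZZ: "closed ZZ"
proof -
  have "ZZ = {0::real..} \<times> {0::real..1}" unfolding ZZ_def by auto
  moreover have "closed ({0::real..} \<times> {0::real..1})"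
    by (intro closed_Times closed_atLeast closed_atLeastAtMost)
  ultimately show ?thesis by simp
qed

lemma classical_ZZ: "classical R \<Longrightarrow> R x y \<Longrightarrow> x \<in> ZZ \<and> y \<in> ZZ"
  unfolding classical_def by blast

lemma classical_total: "classical R \<Longrightarrow> x \<in> ZZ \<Longrightarrow> y \<in> ZZ \<Longrightarrow> R x y \<or> R y x"
  unfolding classical_def by blast

lemma classical_refl: "classical R \<Longrightarrow> x \<in> ZZ \<Longrightarrow> R x x"
  using classical_total by blast

lemma classical_trans: "classical R \<Longrightarrow> R x y \<Longrightarrow> R y z \<Longrightarrow> R x z"
  unfolding classical_def by blast

lemma classical_strict_money:
  "classical R \<Longrightarrow> (t, q) \<in> ZZ \<Longrightarrow> (t', q) \<in> ZZ \<Longrightarrow> t < t' \<Longrightarrow> strictP R (t, q) (t', q)"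
  unfolding classical_def by blast

lemma classical_strict_quality:
  "classical R \<Longrightarrow> (t, q) \<in> ZZ \<Longrightarrow> (t, q') \<in> ZZ \<Longrightarrow> q < q' \<Longrightarrow> strictP R (t, q') (t, q)"
  unfolding classical_def by blast

lemma classical_closed_lower: "classical R \<Longrightarrow> z \<in> ZZ \<Longrightarrow> closed {x \<in> ZZ. R x z}"
  unfolding classical_def by blast

lemma classical_closed_upper: "classical R \<Longrightarrow> z \<in> ZZ \<Longrightarrow> closed {x \<in> ZZ. R z x}"
  unfolding classical_def by blast

lemma strictP_trans_weak_right: "classical R \<Longrightarrow> strictP R a b \<Longrightarrow> R b c \<Longrightarrow> strictP R a c"
  unfolding strictP_def by (meson classical_trans)

lemma strictP_trans_weak_left: "classical R \<Longrightarrow> R a b \<Longrightarrow> strictP R b c \<Longrightarrow> strictP R a c"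
  unfolding strictP_def by (meson classical_trans)

lemma classical_dominance_strict:
  assumes R: "classical R" and x: "x \<in> ZZ" and y: "y \<in> ZZ"
    and le: "fst x \<le> fst y" "snd y \<le> snd x" and "x \<noteq> y"
  shows "strictP R x y"
proof -
  obtain tx qx ty qy where xy: "x = (tx, qx)" "y = (ty, qy)" by (cases x, cases y)
  have corner: "(tx, qy) \<in> ZZ" using x y unfolding xy mem_ZZ_iff by auto
  have quality: "strictP R x (tx, qy)" if "qy < qx"
    using classical_strict_quality[OF R corner] x that xy by auto
  have money: "strictP R (tx, qy) y" if "tx < ty"
    using classical_strict_money[OF R corner] y that xy by auto
  consider "qy < qx" "tx < ty" | "qy < qx" "tx = ty" | "qy = qx" "tx < ty"
    using le \<open>x \<noteq> y\<close> unfolding xy by fastforce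
  then show ?thesis
  proof cases
    case 1
    then show ?thesis using quality money strictP_trans_weak_right[OF R] unfolding strictP_def by blast
  next
    case 2
    then show ?thesis using quality xy by simp
  next
    case 3
    then show ?thesis using money xy by simp
  qed
qed

lemma classical_dominance:
  assumes R: "classical R" and x: "x \<in> ZZ" and y: "y \<in> ZZ"
    and "fst x \<le> fst y" "snd y \<le> snd x"
  shows "R x y"
  using classical_dominance_strict[OF assms] classical_refl[OF R x] unfolding strictP_def
  by (cases "x = y") auto

lemma classical_same_quality_le:
  assumes R: "classical R" and "(t, q) \<in> ZZ" "(t', q) \<in> ZZ" and "R (t, q) (t', q)"
  shows "t \<le> t'"
  using classical_strict_money[OF R assms(3,2)] assms(4) unfolding strictP_def by force

lemma classical_ordered_or_equal:
  assumes R1: "classical R1" and R2: "classical R2" and x1: "x1 \<in> ZZ" and x2: "x2 \<in> ZZ"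
    and "R1 x1 x2" "R2 x2 x1"
  shows "x1 = x2 \<or> bless x1 x2 \<or> bless x2 x1"
proof (rule ccontr)
  assume n: "\<not> (x1 = x2 \<or> bless x1 x2 \<or> bless x2 x1)"
  then consider "fst x1 \<le> fst x2" "snd x2 \<le> snd x1" | "fst x2 \<le> fst x1" "snd x1 \<le> snd x2"
    unfolding bless_def by linarith
  then show False
    using classical_dominance_strict[OF R2 x1 x2] classical_dominance_strict[OF R1 x2 x1] n assms(5,6)
    unfolding strictP_def by cases auto
qed

lemma strictP_stable_right:
  assumes R: "classical R" and a: "a \<in> ZZ" and "strictP R a y"
  shows "\<exists>e>0. \<forall>y'\<in>ZZ. dist y' y < e \<longrightarrow> strictP R a y'"
proof -
  have "open (- {x \<in> ZZ. R x a})" using classical_closed_lower[OF R a] by auto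
  moreover have "y \<in> - {x \<in> ZZ. R x a}" using assms(3) unfolding strictP_def by auto
  ultimately obtain e where e: "e > 0" "ball y e \<subseteq> - {x \<in> ZZ. R x a}"
    unfolding open_contains_ball by blast
  have "strictP R a y'" if "y' \<in> ZZ" "dist y' y < e" for y'
  proof -
    have "\<not> R y' a" using e(2) that by (auto simp: dist_commute)
    then show ?thesis using classical_total[OF R a that(1)] unfolding strictP_def by auto
  qed
  then show ?thesis using e(1) by blast
qed

lemma strictP_stable_left:
  assumes R: "classical R" and a: "a \<in> ZZ" and "strictP R y a"
  shows "\<exists>e>0. \<forall>y'\<in>ZZ. dist y' y < e \<longrightarrow> strictP R y' a"
proof -
  have "open (- {x \<in> ZZ. R a x})" using classical_closed_upper[OF R a] by auto
  moreover have "y \<in> - {x \<in> ZZ. R a x}" using assms(3) unfolding strictP_def by auto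
  ultimately obtain e where e: "e > 0" "ball y e \<subseteq> - {x \<in> ZZ. R a x}"
    unfolding open_contains_ball by blast
  have "strictP R y' a" if "y' \<in> ZZ" "dist y' y < e" for y'
  proof -
    have "\<not> R a y'" using e(2) that by (auto simp: dist_commute)
    then show ?thesis using classical_total[OF R a that(1)] unfolding strictP_def by auto
  qed
  then show ?thesis using e(1) by blast
qed

lemma classical_indiff_between_money:
  assumes R: "classical R" and r: "r \<in> ZZ" and "0 \<le> a" "a \<le> b" "0 \<le> q" "q \<le> 1"
    and "R (a, q) r" "R r (b, q)"
  shows "\<exists>t. a \<le> t \<and> t \<le> b \<and> indiff R (t, q) r"
proof -
  let ?line = "\<lambda>t::real. (t, q)"
  define E1 where "E1 = ?line -` {x \<in> ZZ. R x r}"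
  define E2 where "E2 = ?line -` {x \<in> ZZ. R r x}"
  have "closed E1" "closed E2" unfolding E1_def E2_def
    by (intro continuous_closed_vimage classical_closed_lower classical_closed_upper R r
          continuous_intros)+
  moreover have "{a..b} \<subseteq> E1 \<union> E2"
  proof
    fix t assume "t \<in> {a..b}"
    then have "(t, q) \<in> ZZ" using assms(3-6) by (auto simp: mem_ZZ_iff)
    then show "t \<in> E1 \<union> E2" using classical_total[OF R _ r] unfolding E1_def E2_def by auto
  qed
  moreover have "a \<in> E1 \<inter> {a..b}" "b \<in> E2 \<inter> {a..b}"
    using assms(4,7,8) classical_ZZ[OF R] unfolding E1_def E2_def by auto
  ultimately have "E1 \<inter> E2 \<inter> {a..b} \<noteq> {}"
    using connected_closedD[OF connected_Icc] by blast
  then show ?thesis unfolding E1_def E2_def indiff_def by auto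
qed

lemma classical_indiff_at_quality:
  assumes R: "classical R" and r: "r \<in> ZZ" and p: "p \<in> ZZ" and "R p r"
    and "snd p \<le> q" "q \<le> snd r"
  shows "\<exists>t. 0 \<le> t \<and> t \<le> fst r \<and> indiff R (t, q) r"
proof -
  have Z: "(0, q) \<in> ZZ" "(fst r, q) \<in> ZZ" using p r assms(5,6) by (auto simp: mem_ZZ_iff)
  have "R (0, q) r"
    using classical_trans[OF R classical_dominance[OF R Z(1) p] \<open>R p r\<close>] p assms(5)
    by (auto simp: mem_ZZ_iff)
  moreover have "R r (fst r, q)" using classical_dominance[OF R r Z(2)] assms(6) by auto
  ultimately show ?thesis
    using classical_indiff_between_money[OF R r] Z by (auto simp: mem_ZZ_iff)
qed

lemma single_crossing_sym: "single_crossing A B \<Longrightarrow> single_crossing B A"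
  unfolding single_crossing_def by blast

lemma single_crossing_indiff_unique:
  assumes "single_crossing A B" and A: "classical A" and B: "classical B"
    and "p \<in> ZZ" and r: "r \<in> ZZ" and "indiff A p r" "indiff B p r"
  shows "p = r"
  using assms classical_refl[OF A r] classical_refl[OF B r]
  unfolding single_crossing_def indiff_def by blast

lemma single_crossing_same_quality:
  assumes A: "classical A" and B: "classical B" and SC: "single_crossing A B" and r: "r \<in> ZZ"
    and t1: "(t1, q) \<in> ZZ" "A (t1, q) r" "B r (t1, q)"
    and t2: "(t2, q) \<in> ZZ" "B (t2, q) r" "A r (t2, q)"
  shows "(t1, q) = r"
proof -
  have "t1 \<le> t2" using classical_same_quality_le[OF A t1(1) t2(1)] classical_trans[OF A t1(2) t2(3)] .
  moreover have "t2 \<le> t1"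
    using classical_same_quality_le[OF B t2(1) t1(1)] classical_trans[OF B t2(2) t1(3)] .
  ultimately have "indiff A (t1, q) r" "indiff B (t1, q) r" using t1 t2 unfolding indiff_def by auto
  then show ?thesis using single_crossing_indiff_unique[OF SC A B t1(1) r] by blast
qed

text \<open>On every quality level between the two witnesses one of A, B has a bundle indifferent
  to r; the levels where this bundle is ranked above r by the other preference and those
  where it is ranked below are closed, cover an interval and, by single crossing, are disjoint.\<close>

lemma no_opposite_crossings_at:
  assumes A: "classical A" and B: "classical B" and SC: "single_crossing A B" and r: "r \<in> ZZ"
    and p1: "p1 \<in> ZZ" "bless p1 r" "A p1 r" "B r p1"
    and p2: "p2 \<in> ZZ" "bless p2 r" "B p2 r" "A r p2"
  shows False
proof -
  define lo where "lo = min (snd p1) (snd p2)"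
  define hi where "hi = max (snd p1) (snd p2)"
  have hi: "hi < snd r" using p1 p2 unfolding hi_def bless_def by auto
  define K where "K = cbox (0, lo) (fst r, hi)"
  define C where "C X Y = snd ` (K \<inter> {x \<in> ZZ. X x r} \<inter> {x \<in> ZZ. Y r x})" for X Y :: pref
  have closed_C: "closed (C X Y)" if "classical X" "classical Y" for X Y
    unfolding C_def K_def
    by (intro compact_imp_closed compact_continuous_image continuous_on_snd continuous_on_id
          compact_Int_closed compact_cbox classical_closed_lower classical_closed_upper that r)
  have in_K: "(t, q) \<in> K" if "0 \<le> t" "t \<le> fst r" "lo \<le> q" "q \<le> hi" for t q
    using that unfolding K_def by (simp add: cbox_Pair_eq)
  have level_in_C: "q \<in> C X Y \<union> C Y X"
    if "classical Y" "indiff X (t, q) r" "(t, q) \<in> ZZ" "(t, q) \<in> K" for X Y t q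
    using classical_total[OF that(1,3) r] that(2-4) unfolding C_def indiff_def by force
  have cover: "{lo..hi} \<subseteq> C A B \<union> C B A"
  proof
    fix q assume q: "q \<in> {lo..hi}"
    then have "q \<le> snd r" using hi by simp
    consider "snd p1 \<le> q" | "snd p2 \<le> q" using q unfolding lo_def by (auto simp: min_le_iff_disj)
    then show "q \<in> C A B \<union> C B A"
    proof cases
      case 1
      then obtain t where "0 \<le> t" "t \<le> fst r" "indiff A (t, q) r"
        using classical_indiff_at_quality[OF A r p1(1,3)] \<open>q \<le> snd r\<close> by blast
      moreover have "(t, q) \<in> ZZ" using \<open>indiff A (t, q) r\<close> classical_ZZ[OF A]
        unfolding indiff_def by blast
      ultimately show ?thesis using level_in_C[OF B, of A t q] in_K q by auto
    next
      case 2
      then obtain t where "0 \<le> t" "t \<le> fst r" "indiff B (t, q) r"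
        using classical_indiff_at_quality[OF B r p2(1,3)] \<open>q \<le> snd r\<close> by blast
      moreover have "(t, q) \<in> ZZ" using \<open>indiff B (t, q) r\<close> classical_ZZ[OF B]
        unfolding indiff_def by blast
      ultimately show ?thesis using level_in_C[OF A, of B t q] in_K q by auto
    qed
  qed
  have disjoint: "C A B \<inter> C B A \<inter> {lo..hi} = {}"
    using single_crossing_same_quality[OF A B SC r] hi unfolding C_def by fastforce
  have "snd p1 \<in> C A B \<inter> {lo..hi}" "snd p2 \<in> C B A \<inter> {lo..hi}"
    using p1 p2 in_K[of "fst p1" "snd p1"] in_K[of "fst p2" "snd p2"]
    unfolding C_def lo_def hi_def bless_def mem_ZZ_iff by force+
  then show False
    using connected_closedD[OF connected_Icc disjoint cover closed_C[OF A B] closed_C[OF B A]] by auto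
qed

definition ZZ_pos :: "bndl set" where
  "ZZ_pos = {0<..} \<times> {0<..1}"

lemma ZZ_pos_subset: "ZZ_pos \<subseteq> ZZ"
  unfolding ZZ_pos_def ZZ_def by auto

lemma connected_ZZ_pos: "connected ZZ_pos"
  unfolding ZZ_pos_def by (intro convex_connected convex_Times convex_real_interval)

lemma bless_imp_ZZ_pos: "p \<in> ZZ \<Longrightarrow> bless p r \<Longrightarrow> snd r \<le> 1 \<Longrightarrow> r \<in> ZZ_pos"
  unfolding ZZ_pos_def bless_def mem_ZZ_iff by (cases r) auto

lemma indiff_strictly_below:
  assumes A: "classical A" and r: "r \<in> ZZ_pos"
  shows "\<exists>t q. 0 < t \<and> t < fst r \<and> 0 \<le> q \<and> q < snd r \<and> indiff A (t, q) r"
proof -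
  have rZ: "r \<in> ZZ" using r ZZ_pos_subset by blast
  have r1: "0 < fst r" "0 < snd r" "snd r \<le> 1" using r unfolding ZZ_pos_def by auto
  have "strictP A (0, snd r) r"
    using classical_strict_money[OF A, of 0 "snd r" "fst r"] rZ r1 by (simp add: mem_ZZ_iff)
  then obtain e where e: "e > 0" "\<forall>y'\<in>ZZ. dist y' (0, snd r) < e \<longrightarrow> strictP A y' r"
    using strictP_stable_left[OF A rZ] by blast
  define q where "q = max 0 (snd r - e/2)"
  have q: "0 \<le> q" "q < snd r" using e r1 unfolding q_def by auto
  have Z: "(0, q) \<in> ZZ" "(fst r, q) \<in> ZZ" using q r1 by (auto simp: mem_ZZ_iff)
  have "dist (0::real, q) (0, snd r) < e"
    using e r1 unfolding q_def by (simp add: dist_Pair_Pair dist_real_def)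
  then have s0: "strictP A (0, q) r" using e(2) Z by blast
  have s1: "strictP A r (fst r, q)"
    using classical_strict_quality[OF A Z(2), of "snd r"] rZ q by (cases r) auto
  obtain t where t: "0 \<le> t" "t \<le> fst r" "indiff A (t, q) r"
    using classical_indiff_between_money[OF A rZ order_refl _ q(1), of "fst r"] s0 s1 r1 q
    unfolding strictP_def by auto
  have "t \<noteq> 0" "t \<noteq> fst r" using t(3) s0 s1 unfolding indiff_def strictP_def by auto
  then show ?thesis using t q by (intro exI[of _ t] exI[of _ q]) auto
qed

lemma indiff_money_stable:
  assumes A: "classical A" and r: "r \<in> ZZ"
    and ab: "0 \<le> a" "a < t0" "t0 < b" "b < fst r" and q: "0 \<le> q" "q < snd r"
    and ind: "indiff A (t0, q) r"
  shows "\<exists>e>0. \<forall>r'\<in>ZZ. dist r' r < e \<longrightarrow>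
           (\<exists>t. a \<le> t \<and> t \<le> b \<and> indiff A (t, q) r' \<and> bless (t, q) r')"
proof -
  have Z: "(a, q) \<in> ZZ" "(t0, q) \<in> ZZ" "(b, q) \<in> ZZ" using ab q r by (auto simp: mem_ZZ_iff)
  have "strictP A (a, q) r"
    using strictP_trans_weak_right[OF A classical_strict_money[OF A Z(1,2)]] ab ind
    unfolding indiff_def by blast
  then obtain e1 where e1: "e1 > 0" "\<forall>y'\<in>ZZ. dist y' r < e1 \<longrightarrow> strictP A (a, q) y'"
    using strictP_stable_right[OF A Z(1)] by blast
  have "strictP A r (b, q)"
    using strictP_trans_weak_left[OF A _ classical_strict_money[OF A Z(2,3)]] ab ind
    unfolding indiff_def by blast
  then obtain e2 where e2: "e2 > 0" "\<forall>y'\<in>ZZ. dist y' r < e2 \<longrightarrow> strictP A y' (b, q)"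
    using strictP_stable_left[OF A Z(3)] by blast
  define e where "e = min (min e1 e2) (min (fst r - b) (snd r - q))"
  have "\<exists>t. a \<le> t \<and> t \<le> b \<and> indiff A (t, q) r' \<and> bless (t, q) r'"
    if r': "r' \<in> ZZ" "dist r' r < e" for r'
  proof -
    have "dist (fst r') (fst r) < fst r - b" "dist (snd r') (snd r) < snd r - q"
      using dist_fst_le[of r' r] dist_snd_le[of r' r] r' unfolding e_def by auto
    then have "b < fst r'" "q < snd r'" by (auto simp: dist_real_def)
    moreover have "A (a, q) r'" "A r' (b, q)" using e1 e2 r' unfolding e_def strictP_def by auto
    moreover have "a \<le> b" "q \<le> 1" using ab q r by (auto simp: mem_ZZ_iff)
    ultimately obtain t where "a \<le> t" "t \<le> b" "indiff A (t, q) r'"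
      using classical_indiff_between_money[OF A r'(1) ab(1) _ q(1)] by blast
    with \<open>b < fst r'\<close> \<open>q < snd r'\<close> show ?thesis unfolding bless_def by auto
  qed
  moreover have "e > 0" using e1 e2 ab q unfolding e_def by auto
  ultimately show ?thesis by blast
qed

definition crossing_set :: "pref \<Rightarrow> pref \<Rightarrow> bndl set" where
  "crossing_set A B = {r \<in> ZZ_pos. \<exists>p\<in>ZZ. bless p r \<and> A p r \<and> B r p}"

lemma strictP_money_lower:
  assumes B: "classical B" and a: "a \<in> ZZ" and Z: "(t, q) \<in> ZZ" and "0 < t"
    and "strictP B a (t, q)"
  shows "\<exists>s. 0 \<le> s \<and> s < t \<and> strictP B a (s, q)"
proof -
  obtain e where e: "e > 0" "\<forall>y'\<in>ZZ. dist y' (t, q) < e \<longrightarrow> strictP B a y'"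
    using strictP_stable_right[OF B a assms(5)] by blast
  define s where "s = max 0 (t - e/2)"
  have "(s, q) \<in> ZZ" using Z unfolding s_def by (simp add: mem_ZZ_iff)
  moreover have "dist (s, q) (t, q) < e"
    using e \<open>0 < t\<close> unfolding s_def by (simp add: dist_Pair_Pair dist_real_def)
  moreover have "0 \<le> s" "s < t" using e \<open>0 < t\<close> unfolding s_def by auto
  ultimately show ?thesis using e by blast
qed

lemma openin_crossing_set:
  assumes A: "classical A" and B: "classical B" and SC: "single_crossing A B"
  shows "openin (top_of_set ZZ_pos) (crossing_set A B)"
  unfolding openin_euclidean_subtopology_iff
proof (intro conjI ballI)
  show "crossing_set A B \<subseteq> ZZ_pos" unfolding crossing_set_def by auto
next
  fix r assume "r \<in> crossing_set A B"
  then obtain p where r: "r \<in> ZZ_pos" and p: "p \<in> ZZ" "bless p r" "A p r" "B r p"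
    unfolding crossing_set_def by blast
  have rZ: "r \<in> ZZ" using r ZZ_pos_subset by blast
  obtain t0 q where t0: "0 < t0" "t0 < fst r" "0 \<le> q" "q < snd r" and ind: "indiff A (t0, q) r"
    using indiff_strictly_below[OF A r] by blast
  have q1: "q \<le> 1" using t0 rZ by (simp add: mem_ZZ_iff)
  have Z0: "(t0, q) \<in> ZZ" using t0 q1 by (simp add: mem_ZZ_iff)
  have "\<not> B (t0, q) r"
    using no_opposite_crossings_at[OF A B SC rZ p, of "(t0, q)"] Z0 t0 ind
    unfolding bless_def indiff_def by auto
  then have "strictP B r (t0, q)" using classical_total[OF B Z0 rZ] unfolding strictP_def by auto
  then obtain s where s: "0 \<le> s" "s < t0" "strictP B r (s, q)"
    using strictP_money_lower[OF B rZ Z0 t0(1)] by blast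
  have Zs: "(s, q) \<in> ZZ" using s t0 q1 by (simp add: mem_ZZ_iff)
  obtain e1 where e1: "e1 > 0" "\<forall>r'\<in>ZZ. dist r' r < e1 \<longrightarrow> strictP B r' (s, q)"
    using strictP_stable_left[OF B Zs s(3)] by blast
  obtain e2 where e2: "e2 > 0" "\<forall>r'\<in>ZZ. dist r' r < e2 \<longrightarrow>
      (\<exists>t. s \<le> t \<and> t \<le> (t0 + fst r) / 2 \<and> indiff A (t, q) r' \<and> bless (t, q) r')"
  proof -
    have "t0 < (t0 + fst r) / 2" "(t0 + fst r) / 2 < fst r" using t0 by auto
    then show ?thesis using indiff_money_stable[OF A rZ s(1,2) _ _ t0(3,4) ind] that by blast
  qed
  have "r' \<in> crossing_set A B" if r': "r' \<in> ZZ_pos" "dist r' r < min e1 e2" for r'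
  proof -
    have r'Z: "r' \<in> ZZ" using r'(1) ZZ_pos_subset by blast
    then obtain t where t: "s \<le> t" "indiff A (t, q) r'" "bless (t, q) r'" using e2 r' by auto
    have tZ: "(t, q) \<in> ZZ" using s t q1 t0 by (simp add: mem_ZZ_iff)
    have "B (s, q) (t, q)" using classical_dominance[OF B Zs tZ] t by simp
    moreover have "B r' (s, q)" using e1 r'Z r' unfolding strictP_def by auto
    ultimately have "B r' (t, q)" using classical_trans[OF B] by blast
    then show ?thesis using r' t tZ unfolding crossing_set_def indiff_def by blast
  qed
  then show "\<exists>e>0. \<forall>r'\<in>ZZ_pos. dist r' r < e \<longrightarrow> r' \<in> crossing_set A B"
    using e1 e2 by (intro exI[of _ "min e1 e2"]) auto
qed

text \<open>The crossing sets of A, B and of B, A split the connected set ZZ_pos into two disjoint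
  relatively open parts, so one of them is empty.\<close>

lemma no_opposite_crossings:
  assumes A: "classical A" and B: "classical B" and SC: "single_crossing A B"
    and p1: "p1 \<in> ZZ" "r1 \<in> ZZ" "bless p1 r1" "A p1 r1" "B r1 p1"
    and p2: "p2 \<in> ZZ" "r2 \<in> ZZ" "bless p2 r2" "B p2 r2" "A r2 p2"
  shows False
proof -
  have "r1 \<in> ZZ_pos" "r2 \<in> ZZ_pos"
    using bless_imp_ZZ_pos p1(1-3) p2(1-3) by (auto simp: mem_ZZ_iff)
  then have "r1 \<in> crossing_set A B" "r2 \<in> crossing_set B A"
    using p1 p2 unfolding crossing_set_def by blast+
  moreover have "ZZ_pos \<subseteq> crossing_set A B \<union> crossing_set B A"
  proof
    fix r assume r: "r \<in> ZZ_pos"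
    then obtain t q where tq: "0 < t" "t < fst r" "0 \<le> q" "q < snd r" "indiff A (t, q) r"
      using indiff_strictly_below[OF A] by blast
    have rZ: "r \<in> ZZ" using r ZZ_pos_subset by blast
    then have "(t, q) \<in> ZZ" using tq by (simp add: mem_ZZ_iff)
    moreover have "bless (t, q) r" using tq unfolding bless_def by simp
    ultimately show "r \<in> crossing_set A B \<union> crossing_set B A"
      using classical_total[OF B _ rZ] tq r unfolding crossing_set_def indiff_def by blast
  qed
  moreover have "crossing_set A B \<inter> crossing_set B A = {}"
    using no_opposite_crossings_at[OF A B SC] ZZ_pos_subset unfolding crossing_set_def by blast
  ultimately show False
    using connected_ZZ_pos openin_crossing_set[OF A B SC]
      openin_crossing_set[OF B A single_crossing_sym[OF SC]]
    unfolding connected_openin by blast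
qed

lemma prec_lower_contour:
  assumes "prec A B" "z \<in> ZZ" "x \<in> ZZ" "bleq x z" "B x z"
  shows "A x z"
  using assms unfolding prec_def box_def by blast

lemma strictP_money_raise:
  assumes R: "classical R" and x: "x \<in> ZZ" and y: "y \<in> ZZ" and "strictP R y x" and "bless y x"
  shows "\<exists>d>0. bless (fst y + d, snd y) x \<and> (fst y + d, snd y) \<in> ZZ \<and> strictP R (fst y + d, snd y) x"
proof -
  obtain e where e: "e > 0" "\<forall>y'\<in>ZZ. dist y' y < e \<longrightarrow> strictP R y' x"
    using strictP_stable_left[OF R x assms(4)] by blast
  define d where "d = min (e/2) ((fst x - fst y)/2)"
  have d: "0 < d" "d < e" "fst y + d < fst x"
    using e \<open>bless y x\<close> min.cobounded1[of "e/2" "(fst x - fst y)/2"] min.cobounded2[of "e/2" "(fst x - fst y)/2"]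
    unfolding d_def bless_def by auto
  have Z: "(fst y + d, snd y) \<in> ZZ" using y d by (simp add: mem_ZZ_iff)
  have "dist (fst y + d, snd y) y = d" using d by (cases y) (simp add: dist_Pair_Pair dist_real_def)
  then have "strictP R (fst y + d, snd y) x" using e d Z by auto
  moreover have "bless (fst y + d, snd y) x" using \<open>bless y x\<close> d unfolding bless_def by simp
  ultimately show ?thesis using d Z by blast
qed

text \<open>Raising the price of y slightly keeps it strictly B-worse than x while placing it
  strictly below x, where the definition of prec applies.\<close>

lemma prec_upper_contour:
  assumes A: "classical A" and B: "classical B" and p: "prec A B"
    and x: "x \<in> ZZ" and y: "y \<in> ZZ" and "bless y x" and "A x y"
  shows "B x y"
proof (rule ccontr)
  assume "\<not> B x y"
  then have "strictP B y x" using classical_total[OF B x y] unfolding strictP_def by auto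
  then obtain d where d: "d > 0" "bless (fst y + d, snd y) x" "(fst y + d, snd y) \<in> ZZ"
    "strictP B (fst y + d, snd y) x"
    using strictP_money_raise[OF B x y _ \<open>bless y x\<close>] by blast
  have "A (fst y + d, snd y) x"
    using prec_lower_contour[OF p x d(3)] d(2,4) unfolding bleq_def strictP_def by blast
  then have "A (fst y + d, snd y) y" using classical_trans[OF A _ \<open>A x y\<close>] by blast
  moreover have "strictP A y (fst y + d, snd y)"
    using classical_strict_money[OF A, of "fst y" "snd y"] y d(1,3) by simp
  ultimately show False unfolding strictP_def by simp
qed

lemma prec_both_imp:
  assumes A: "classical A" and B: "classical B" and p: "prec A B" and p': "prec B A" and a: "A x y"
  shows "B x y"
proof -
  have x: "x \<in> ZZ" and y: "y \<in> ZZ" using classical_ZZ[OF A a] by auto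
  consider "x = y" | "bless x y" | "bless y x"
    | "fst x \<le> fst y" "snd y \<le> snd x" | "fst y \<le> fst x" "snd x \<le> snd y" "x \<noteq> y"
    unfolding bless_def by linarith
  then show ?thesis
  proof cases
    case 1
    then show ?thesis using classical_refl[OF B x] by simp
  next
    case 2
    then show ?thesis using prec_lower_contour[OF p' y x] a unfolding bleq_def by blast
  next
    case 3
    then show ?thesis using prec_upper_contour[OF A B p x y _ a] by blast
  next
    case 4
    then show ?thesis using classical_dominance[OF B x y] by blast
  next
    case 5
    then show ?thesis using classical_dominance_strict[OF A y x] a unfolding strictP_def by blast
  qed
qed

lemma prec_asym:
  assumes "classical A" "classical B" "prec A B"
  shows "\<not> prec B A"
proof
  assume "prec B A"
  then have "A = B" using prec_both_imp assms by (intro ext iffI) blast+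
  then show False using \<open>prec A B\<close> unfolding prec_def by simp
qed

lemma prec_trans:
  assumes "classical A" "classical B" "classical C" "prec A B" "prec B C"
  shows "prec A C"
  using assms prec_asym[of A B] unfolding prec_def by blast

lemma preceq_trans:
  assumes "classical A" "classical B" "classical C" "preceq A B" "preceq B C"
  shows "preceq A C"
  using assms prec_trans unfolding preceq_def by blast

lemma prec_linear:
  assumes A: "classical A" and B: "classical B" and SC: "single_crossing A B" and "A \<noteq> B"
  shows "prec A B \<or> prec B A"
proof (rule ccontr)
  assume "\<not> (prec A B \<or> prec B A)"
  then obtain z x y w where zx: "z \<in> ZZ" "x \<in> ZZ" "bleq x z" "B x z" "\<not> A x z"
    and yw: "y \<in> ZZ" "w \<in> ZZ" "bleq w y" "A w y" "\<not> B w y"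
    using \<open>A \<noteq> B\<close> unfolding prec_def box_def by blast
  have "bless x z" using zx classical_refl[OF A zx(1)] unfolding bleq_def by auto
  moreover have "bless w y" using yw classical_refl[OF B yw(1)] unfolding bleq_def by auto
  moreover have "A z x" "B y w" using classical_total[OF A zx(1,2)] classical_total[OF B yw(1,2)] zx yw
    by auto
  ultimately show False using no_opposite_crossings[OF A B SC yw(2,1) _ yw(4) _ zx(2,1) _ zx(4)] by blast
qed

lemma rich_single_crossing_classical: "rich_single_crossing D \<Longrightarrow> R \<in> D \<Longrightarrow> classical R"
  unfolding rich_single_crossing_def by blast

lemma rich_single_crossing_rich:
  "rich_single_crossing D \<Longrightarrow> x \<in> ZZ \<Longrightarrow> y \<in> ZZ \<Longrightarrow> bless x y \<Longrightarrow> \<exists>R\<in>D. indiff R x y"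
  unfolding rich_single_crossing_def by blast

lemma rich_single_crossing_prec_linear:
  assumes "rich_single_crossing D" "A \<in> D" "B \<in> D" "A \<noteq> B"
  shows "prec A B \<or> prec B A"
  using assms prec_linear rich_single_crossing_classical unfolding rich_single_crossing_def by blast

lemma strategy_proofD: "strategy_proof D F \<Longrightarrow> R1 \<in> D \<Longrightarrow> R2 \<in> D \<Longrightarrow> R1 (F R1) (F R2)"
  unfolding strategy_proof_def by blast

lemma strategy_proof_prec_bleq:
  assumes D: "rich_single_crossing D" and FZ: "\<forall>R\<in>D. F R \<in> ZZ" and SP: "strategy_proof D F"
    and R1: "R1 \<in> D" and R2: "R2 \<in> D" and p: "prec R1 R2"
  shows "bleq (F R1) (F R2)"
proof -
  have c1: "classical R1" and c2: "classical R2" using rich_single_crossing_classical[OF D] R1 R2 by auto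
  have x1: "F R1 \<in> ZZ" and x2: "F R2 \<in> ZZ" using FZ R1 R2 by auto
  have a: "R1 (F R1) (F R2)" and b: "R2 (F R2) (F R1)" using strategy_proofD[OF SP] R1 R2 by auto
  have "\<not> bless (F R2) (F R1)"
  proof
    assume bl: "bless (F R2) (F R1)"
    have "R2 (F R1) (F R2)" using prec_upper_contour[OF c1 c2 p x1 x2 bl a] .
    moreover have "R1 (F R2) (F R1)" using prec_lower_contour[OF p x1 x2 _ b] bl unfolding bleq_def by blast
    moreover have "single_crossing R1 R2"
      using D R1 R2 p unfolding rich_single_crossing_def prec_def by blast
    ultimately have "F R2 = F R1"
      using single_crossing_indiff_unique[OF _ c1 c2 x2 x1] a b unfolding indiff_def by blast
    then show False using bl unfolding bless_def by simp
  qed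
  then show ?thesis using classical_ordered_or_equal[OF c1 c2 x1 x2 a b] unfolding bleq_def by blast
qed

lemma strategy_proof_preceq_bleq:
  assumes "rich_single_crossing D" "\<forall>R\<in>D. F R \<in> ZZ" "strategy_proof D F"
    and "R1 \<in> D" "R2 \<in> D" "preceq R1 R2"
  shows "bleq (F R1) (F R2)"
  using strategy_proof_prec_bleq[OF assms(1-5)] assms(6) unfolding preceq_def bleq_def by auto

lemma strategy_proof_ordered_range:
  assumes D: "rich_single_crossing D" and FZ: "\<forall>R\<in>D. F R \<in> ZZ" and SP: "strategy_proof D F"
  shows "ordered_range D F"
  unfolding ordered_range_def
proof (intro ballI impI)
  fix x y assume "x \<in> F ` D" "y \<in> F ` D" "x \<noteq> y"
  then obtain R1 R2 where "R1 \<in> D" "R2 \<in> D" "x = F R1" "y = F R2" by auto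
  then show "bless x y \<or> bless y x"
    using classical_ordered_or_equal[OF rich_single_crossing_classical[OF D]
        rich_single_crossing_classical[OF D], of R1 R2 x y] FZ strategy_proofD[OF SP] \<open>x \<noteq> y\<close>
    by auto
qed

lemma preceq_chain_inc:
  assumes D: "rich_single_crossing D" and Rs: "\<forall>n. Rs n \<in> D"
    and inc: "\<forall>n. preceq (Rs n) (Rs (Suc n))" and "n \<le> m"
  shows "preceq (Rs n) (Rs m)"
proof (rule transitive_stepwise_le[OF \<open>n \<le> m\<close>])
  show "preceq (Rs i) (Rs i)" for i unfolding preceq_def by simp
  show "preceq (Rs i) (Rs k)" if "preceq (Rs i) (Rs j)" "preceq (Rs j) (Rs k)" for i j k
    using preceq_trans[OF _ _ _ that] rich_single_crossing_classical[OF D] Rs by blast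
  show "preceq (Rs i) (Rs (Suc i))" for i using inc by blast
qed

lemma preceq_chain_dec:
  assumes D: "rich_single_crossing D" and Rs: "\<forall>n. Rs n \<in> D"
    and dec: "\<forall>n. preceq (Rs (Suc n)) (Rs n)" and "n \<le> m"
  shows "preceq (Rs m) (Rs n)"
proof (rule transitive_stepwise_le[OF \<open>n \<le> m\<close>, where R = "\<lambda>i j. preceq (Rs j) (Rs i)"])
  show "preceq (Rs i) (Rs i)" for i unfolding preceq_def by simp
  show "preceq (Rs k) (Rs i)" if "preceq (Rs j) (Rs i)" "preceq (Rs k) (Rs j)" for i j k
    using preceq_trans[OF _ _ _ that(2,1)] rich_single_crossing_classical[OF D] Rs by blast
  show "preceq (Rs (Suc i)) (Rs i)" for i using dec by blast
qed

lemma order_conv_inc_chain_preceq: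
  assumes D: "rich_single_crossing D" and R: "R \<in> D" and Rs: "\<forall>n. Rs n \<in> D"
    and inc: "\<forall>n. preceq (Rs n) (Rs (Suc n))" and oc: "order_conv D Rs R"
  shows "preceq (Rs n) R"
proof (rule ccontr)
  assume "\<not> preceq (Rs n) R"
  then have "prec R (Rs n)" using rich_single_crossing_prec_linear[OF D] Rs R unfolding preceq_def by blast
  then obtain N where "\<forall>m\<ge>N. prec (Rs m) (Rs n)" using oc Rs unfolding order_conv_def by blast
  then have "prec (Rs (max N n)) (Rs n)" by simp
  moreover have "preceq (Rs n) (Rs (max N n))" using preceq_chain_inc[OF D Rs inc] by simp
  ultimately have "prec (Rs n) (Rs (max N n))" unfolding preceq_def prec_def by auto
  then show False
    using prec_asym rich_single_crossing_classical[OF D] Rs \<open>prec (Rs (max N n)) (Rs n)\<close> by blast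
qed

lemma order_conv_dec_chain_preceq:
  assumes D: "rich_single_crossing D" and R: "R \<in> D" and Rs: "\<forall>n. Rs n \<in> D"
    and dec: "\<forall>n. preceq (Rs (Suc n)) (Rs n)" and oc: "order_conv D Rs R"
  shows "preceq R (Rs n)"
proof (rule ccontr)
  assume "\<not> preceq R (Rs n)"
  then have "prec (Rs n) R" using rich_single_crossing_prec_linear[OF D] Rs R unfolding preceq_def by blast
  then obtain N where "\<forall>m\<ge>N. prec (Rs n) (Rs m)" using oc Rs unfolding order_conv_def by blast
  then have "prec (Rs n) (Rs (max N n))" by simp
  moreover have "preceq (Rs (max N n)) (Rs n)" using preceq_chain_dec[OF D Rs dec] by simp
  ultimately have "prec (Rs (max N n)) (Rs n)" unfolding preceq_def prec_def by auto
  then show False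
    using prec_asym rich_single_crossing_classical[OF D] Rs \<open>prec (Rs n) (Rs (max N n))\<close> by blast
qed

lemma bleq_imp_le: "bleq u v \<Longrightarrow> fst u \<le> fst v \<and> snd u \<le> snd v"
  unfolding bleq_def bless_def by auto

lemma bleq_incseq_convergent:
  assumes "\<And>n m. n \<le> m \<Longrightarrow> bleq (x n) (x m)" and "\<And>n. bleq (x n) z"
  shows "\<exists>L. x \<longlonglongrightarrow> L \<and> fst L \<le> fst z \<and> snd L \<le> snd z"
proof -
  have "incseq (\<lambda>n. fst (x n))" "incseq (\<lambda>n. snd (x n))"
    using assms(1) bleq_imp_le unfolding incseq_def by blast+
  then obtain a b where a: "(\<lambda>n. fst (x n)) \<longlonglongrightarrow> a" and b: "(\<lambda>n. snd (x n)) \<longlonglongrightarrow> b"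
    using incseq_convergent assms(2) bleq_imp_le by metis
  have "a \<le> fst z" "b \<le> snd z"
    using LIMSEQ_le_const2[OF a] LIMSEQ_le_const2[OF b] assms(2) bleq_imp_le by blast+
  moreover have "x \<longlonglongrightarrow> (a, b)" using tendsto_Pair[OF a b] by simp
  ultimately show ?thesis by auto
qed

lemma bleq_decseq_convergent:
  assumes "\<And>n m. n \<le> m \<Longrightarrow> bleq (x m) (x n)" and "\<And>n. bleq z (x n)"
  shows "\<exists>L. x \<longlonglongrightarrow> L \<and> fst z \<le> fst L \<and> snd z \<le> snd L"
proof -
  have "decseq (\<lambda>n. fst (x n))" "decseq (\<lambda>n. snd (x n))"
    using assms(1) bleq_imp_le unfolding decseq_def by blast+
  then obtain a b where a: "(\<lambda>n. fst (x n)) \<longlonglongrightarrow> a" and b: "(\<lambda>n. snd (x n)) \<longlonglongrightarrow> b"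
    using decseq_convergent assms(2) bleq_imp_le by metis
  have "fst z \<le> a" "snd z \<le> b"
    using LIMSEQ_le_const[OF a] LIMSEQ_le_const[OF b] assms(2) bleq_imp_le by blast+
  moreover have "x \<longlonglongrightarrow> (a, b)" using tendsto_Pair[OF a b] by simp
  ultimately show ?thesis by auto
qed

lemma pref_limit_upper:
  assumes R: "classical R" and z: "z \<in> ZZ" and "x \<longlonglongrightarrow> L" and "eventually (\<lambda>n. R z (x n)) sequentially"
  shows "R z L"
proof -
  have "eventually (\<lambda>n. x n \<in> {y \<in> ZZ. R z y}) sequentially"
    using assms(4) by (rule eventually_mono) (use classical_ZZ[OF R] in blast)
  then have "L \<in> {y \<in> ZZ. R z y}"
    using Lim_in_closed_set[OF classical_closed_upper[OF R z] _ trivial_limit_sequentially assms(3)]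
    by blast
  then show ?thesis by simp
qed

lemma pref_limit_lower:
  assumes R: "classical R" and z: "z \<in> ZZ" and "x \<longlonglongrightarrow> L" and "eventually (\<lambda>n. R (x n) z) sequentially"
  shows "R L z"
proof -
  have "eventually (\<lambda>n. x n \<in> {y \<in> ZZ. R y z}) sequentially"
    using assms(4) by (rule eventually_mono) (use classical_ZZ[OF R] in blast)
  then have "L \<in> {y \<in> ZZ. R y z}"
    using Lim_in_closed_set[OF classical_closed_lower[OF R z] _ trivial_limit_sequentially assms(3)]
    by blast
  then show ?thesis by simp
qed

text \<open>A preference indifferent between z and a bundle w slightly above L can lie neither below R
  (it would weakly prefer L to the better bundle w) nor above R (R would weakly prefer w to z).\<close>

lemma limit_below_not_strict:
  assumes D: "rich_single_crossing D" and R: "R \<in> D" and z: "z \<in> ZZ" and L: "L \<in> ZZ"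
    and "bless L z" and strict: "strictP R z L"
    and lower: "\<And>A. A \<in> D \<Longrightarrow> prec A R \<Longrightarrow> A L z"
  shows False
proof -
  have cR: "classical R" using rich_single_crossing_classical[OF D R] .
  obtain e where e: "e > 0" "\<forall>y'\<in>ZZ. dist y' L < e \<longrightarrow> strictP R z y'"
    using strictP_stable_right[OF cR z strict] by blast
  define d where "d = min (e/2) ((snd z - snd L)/2)"
  have d: "0 < d" "d < e" "snd L + d < snd z"
    using e \<open>bless L z\<close> min.cobounded1[of "e/2" "(snd z - snd L)/2"]
      min.cobounded2[of "e/2" "(snd z - snd L)/2"]
    unfolding d_def bless_def by auto
  define w where "w = (fst L, snd L + d)"
  have w: "w \<in> ZZ" "bless w z" using L z d \<open>bless L z\<close> unfolding w_def bless_def mem_ZZ_iff by auto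
  have "dist w L = d" unfolding w_def using d by (cases L) (simp add: dist_Pair_Pair dist_real_def)
  then have Rzw: "strictP R z w" using e d w by auto
  obtain A where A: "A \<in> D" "indiff A w z" using rich_single_crossing_rich[OF D w(1) z w(2)] by blast
  have cA: "classical A" using rich_single_crossing_classical[OF D A(1)] .
  have "A \<noteq> R" using A(2) Rzw unfolding indiff_def strictP_def by auto
  then consider "prec A R" | "prec R A" using rich_single_crossing_prec_linear[OF D A(1) R] by blast
  then show False
  proof cases
    case 1
    have "A L w" using classical_trans[OF cA lower[OF A(1) 1]] A(2) unfolding indiff_def by blast
    moreover have "strictP A w L"
      using classical_strict_quality[OF cA, of "fst L" "snd L" "snd L + d"] L w d unfolding w_def by simp
    ultimately show False unfolding strictP_def by blast
  next
    case 2
    have "R w z" using prec_lower_contour[OF 2 z w(1)] A(2) w(2) unfolding indiff_def bleq_def by blast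
    then show False using Rzw unfolding strictP_def by blast
  qed
qed

lemma limit_above_not_strict:
  assumes D: "rich_single_crossing D" and R: "R \<in> D" and z: "z \<in> ZZ" and L: "L \<in> ZZ"
    and "bless z L" and strict: "strictP R z L"
    and upper: "\<And>B. B \<in> D \<Longrightarrow> prec R B \<Longrightarrow> B L z"
  shows False
proof -
  have cR: "classical R" using rich_single_crossing_classical[OF D R] .
  obtain e where e: "e > 0" "\<forall>y'\<in>ZZ. dist y' L < e \<longrightarrow> strictP R z y'"
    using strictP_stable_right[OF cR z strict] by blast
  define d where "d = min (e/2) ((fst L - fst z)/2)"
  have d: "0 < d" "d < e" "fst z < fst L - d"
    using e \<open>bless z L\<close> min.cobounded1[of "e/2" "(fst L - fst z)/2"]
      min.cobounded2[of "e/2" "(fst L - fst z)/2"]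
    unfolding d_def bless_def by auto
  define w where "w = (fst L - d, snd L)"
  have w: "w \<in> ZZ" "bless z w" using L z d \<open>bless z L\<close> unfolding w_def bless_def mem_ZZ_iff by auto
  have "dist w L = d" unfolding w_def using d by (cases L) (simp add: dist_Pair_Pair dist_real_def)
  then have Rzw: "strictP R z w" using e d w by auto
  obtain B where B: "B \<in> D" "indiff B z w" using rich_single_crossing_rich[OF D z w(1,2)] by blast
  have cB: "classical B" using rich_single_crossing_classical[OF D B(1)] .
  have "B \<noteq> R" using B(2) Rzw unfolding indiff_def strictP_def by auto
  then consider "prec B R" | "prec R B" using rich_single_crossing_prec_linear[OF D B(1) R] by blast
  then show False
  proof cases
    case 1
    have "R w z" using prec_upper_contour[OF cB cR 1 w(1) z w(2)] B(2) unfolding indiff_def by blast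
    then show False using Rzw unfolding strictP_def by blast
  next
    case 2
    have "B L w" using classical_trans[OF cB upper[OF B(1) 2]] B(2) unfolding indiff_def by blast
    moreover have "strictP B w L"
      using classical_strict_money[OF cB, of "fst L - d" "snd L" "fst L"] L w d unfolding w_def by simp
    ultimately show False unfolding strictP_def by blast
  qed
qed

lemma indiff_limit_from_below:
  assumes D: "rich_single_crossing D" and R: "R \<in> D" and z: "z \<in> ZZ" and L: "L \<in> ZZ"
    and le: "fst L \<le> fst z" "snd L \<le> snd z" and RzL: "R z L"
    and lower: "\<And>A. A \<in> D \<Longrightarrow> prec A R \<Longrightarrow> A L z"
    and nontrivial: "L \<noteq> z \<Longrightarrow> \<exists>A\<in>D. prec A R"
  shows "indiff R L z"
proof -
  have cR: "classical R" using rich_single_crossing_classical[OF D R] .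
  have "R L z"
  proof (rule ccontr)
    assume nR: "\<not> R L z"
    then have strict: "strictP R z L" and "L \<noteq> z"
      using RzL classical_refl[OF cR z] unfolding strictP_def by auto
    consider "snd L = snd z" | "fst L = fst z" "snd L < snd z" | "bless L z"
      using le unfolding bless_def by linarith
    then show False
    proof cases
      case 1
      then show False using classical_dominance[OF cR L z] le nR by simp
    next
      case 2
      obtain A where A: "A \<in> D" "prec A R" using nontrivial \<open>L \<noteq> z\<close> by blast
      have "strictP A z L"
        using classical_strict_quality[OF rich_single_crossing_classical[OF D A(1)], of "fst z" "snd L" "snd z"]
          L z 2 by (cases L, cases z) auto
      then show False using lower[OF A] unfolding strictP_def by blast
    next
      case 3
      then show False using limit_below_not_strict[OF D R z L 3 strict] lower by blast
    qed
  qed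
  then show ?thesis using RzL unfolding indiff_def by blast
qed

lemma indiff_limit_from_above:
  assumes D: "rich_single_crossing D" and R: "R \<in> D" and z: "z \<in> ZZ" and L: "L \<in> ZZ"
    and le: "fst z \<le> fst L" "snd z \<le> snd L" and RzL: "R z L"
    and upper: "\<And>B. B \<in> D \<Longrightarrow> prec R B \<Longrightarrow> B L z"
    and nontrivial: "L \<noteq> z \<Longrightarrow> \<exists>B\<in>D. prec R B"
  shows "indiff R L z"
proof -
  have cR: "classical R" using rich_single_crossing_classical[OF D R] .
  have "R L z"
  proof (rule ccontr)
    assume nR: "\<not> R L z"
    then have strict: "strictP R z L" and "L \<noteq> z"
      using RzL classical_refl[OF cR z] unfolding strictP_def by auto
    consider "fst L = fst z" | "snd L = snd z" "fst z < fst L" | "bless z L"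
      using le unfolding bless_def by linarith
    then show False
    proof cases
      case 1
      then show False using classical_dominance[OF cR L z] le nR by simp
    next
      case 2
      obtain B where B: "B \<in> D" "prec R B" using nontrivial \<open>L \<noteq> z\<close> by blast
      have "strictP B z L"
        using classical_strict_money[OF rich_single_crossing_classical[OF D B(1)], of "fst z" "snd z" "fst L"]
          L z 2 by (cases L, cases z) auto
      then show False using upper[OF B] unfolding strictP_def by blast
    next
      case 3
      then show False using limit_above_not_strict[OF D R z L 3 strict] upper by blast
    qed
  qed
  then show ?thesis using RzL unfolding indiff_def by blast
qed

lemma limit_ne_imp_nonconstant:
  fixes F :: "pref \<Rightarrow> bndl"
  assumes "(\<lambda>n. F (Rs n)) \<longlonglongrightarrow> L" and "L \<noteq> F R"
  shows "\<exists>n. Rs n \<noteq> R"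
proof (rule ccontr)
  assume "\<not> (\<exists>n. Rs n \<noteq> R)"
  then have "(\<lambda>n. F (Rs n)) = (\<lambda>n. F R)" by auto
  then have "F R = L" using assms(1) LIMSEQ_const_iff by metis
  then show False using assms(2) by simp
qed

lemma strategy_proof_continuous_inc:
  assumes D: "rich_single_crossing D" and FZ: "\<forall>R\<in>D. F R \<in> ZZ" and SP: "strategy_proof D F"
    and R: "R \<in> D" and Rs: "\<forall>n. Rs n \<in> D" and inc: "\<forall>n. preceq (Rs n) (Rs (Suc n))"
    and oc: "order_conv D Rs R"
  shows "\<exists>L. (\<lambda>n. F (Rs n)) \<longlonglongrightarrow> L \<and> indiff R L (F R)"
proof -
  have cl: "\<And>A. A \<in> D \<Longrightarrow> classical A" using rich_single_crossing_classical[OF D] .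
  have z: "F R \<in> ZZ" using FZ R by blast
  have below: "\<And>n. preceq (Rs n) R" using order_conv_inc_chain_preceq[OF D R Rs inc oc] .
  have bound: "bleq (F (Rs n)) (F R)" for n
    using strategy_proof_preceq_bleq[OF D FZ SP Rs[rule_format] R below] .
  have chain: "bleq (F (Rs n)) (F (Rs m))" if "n \<le> m" for n m
    using strategy_proof_preceq_bleq[OF D FZ SP Rs[rule_format] Rs[rule_format]
        preceq_chain_inc[OF D Rs inc that]] .
  obtain L where lim: "(\<lambda>n. F (Rs n)) \<longlonglongrightarrow> L" and le: "fst L \<le> fst (F R)" "snd L \<le> snd (F R)"
    using bleq_incseq_convergent[where x = "\<lambda>n. F (Rs n)", OF chain bound] by blast
  have "eventually (\<lambda>n. F (Rs n) \<in> ZZ) sequentially" using FZ Rs by (simp add: always_eventually)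
  then have L: "L \<in> ZZ" using Lim_in_closed_set[OF closed_ZZ _ trivial_limit_sequentially lim] by blast
  have "eventually (\<lambda>n. R (F R) (F (Rs n))) sequentially"
    using strategy_proofD[OF SP R] Rs by (simp add: always_eventually)
  then have "R (F R) L" by (rule pref_limit_upper[OF cl[OF R] z lim])
  moreover have "A L (F R)" if A: "A \<in> D" "prec A R" for A
  proof -
    obtain N where N: "\<forall>n\<ge>N. prec A (Rs n)" using oc A unfolding order_conv_def by blast
    have "A (F (Rs n)) (F R)" if "n \<ge> N" for n
    proof -
      have "Rs n (F (Rs n)) (F R)" using strategy_proofD[OF SP] Rs R by blast
      then show ?thesis using prec_lower_contour[OF N[rule_format, OF that] z] FZ Rs bound by blast
    qed
    then show ?thesis
      using pref_limit_lower[OF cl[OF A(1)] z lim] unfolding eventually_sequentially by blast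
  qed
  moreover have "\<exists>A\<in>D. prec A R" if "L \<noteq> F R"
    using limit_ne_imp_nonconstant[where F = F and Rs = Rs, OF lim that] below Rs unfolding preceq_def by blast
  ultimately have "indiff R L (F R)" by (rule indiff_limit_from_below[OF D R z L le])
  then show ?thesis using lim by blast
qed

lemma strategy_proof_continuous_dec:
  assumes D: "rich_single_crossing D" and FZ: "\<forall>R\<in>D. F R \<in> ZZ" and SP: "strategy_proof D F"
    and R: "R \<in> D" and Rs: "\<forall>n. Rs n \<in> D" and dec: "\<forall>n. preceq (Rs (Suc n)) (Rs n)"
    and oc: "order_conv D Rs R"
  shows "\<exists>L. (\<lambda>n. F (Rs n)) \<longlonglongrightarrow> L \<and> indiff R L (F R)"
proof -
  have cl: "\<And>A. A \<in> D \<Longrightarrow> classical A" using rich_single_crossing_classical[OF D] .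
  have z: "F R \<in> ZZ" using FZ R by blast
  have above: "\<And>n. preceq R (Rs n)" using order_conv_dec_chain_preceq[OF D R Rs dec oc] .
  have bound: "bleq (F R) (F (Rs n))" for n
    using strategy_proof_preceq_bleq[OF D FZ SP R Rs[rule_format] above] .
  have chain: "bleq (F (Rs m)) (F (Rs n))" if "n \<le> m" for n m
    using strategy_proof_preceq_bleq[OF D FZ SP Rs[rule_format] Rs[rule_format]
        preceq_chain_dec[OF D Rs dec that]] .
  obtain L where lim: "(\<lambda>n. F (Rs n)) \<longlonglongrightarrow> L" and le: "fst (F R) \<le> fst L" "snd (F R) \<le> snd L"
    using bleq_decseq_convergent[where x = "\<lambda>n. F (Rs n)", OF chain bound] by blast
  have "eventually (\<lambda>n. F (Rs n) \<in> ZZ) sequentially" using FZ Rs by (simp add: always_eventually)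
  then have L: "L \<in> ZZ" using Lim_in_closed_set[OF closed_ZZ _ trivial_limit_sequentially lim] by blast
  have "eventually (\<lambda>n. R (F R) (F (Rs n))) sequentially"
    using strategy_proofD[OF SP R] Rs by (simp add: always_eventually)
  then have "R (F R) L" by (rule pref_limit_upper[OF cl[OF R] z lim])
  moreover have "B L (F R)" if B: "B \<in> D" "prec R B" for B
  proof -
    obtain N where N: "\<forall>n\<ge>N. prec (Rs n) B" using oc B unfolding order_conv_def by blast
    have "B (F (Rs n)) (F R)" if "n \<ge> N" for n
    proof (cases "F R = F (Rs n)")
      case True
      then show ?thesis using classical_refl[OF cl[OF B(1)] z] by simp
    next
      case False
      then have "bless (F R) (F (Rs n))" using bound[of n] unfolding bleq_def by blast
      then show ?thesis using prec_upper_contour[OF cl cl N[rule_format, OF that]] strategy_proofD[OF SP]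
          FZ Rs R B(1) by blast
    qed
    then show ?thesis
      using pref_limit_lower[OF cl[OF B(1)] z lim] unfolding eventually_sequentially by blast
  qed
  moreover have "\<exists>B\<in>D. prec R B" if "L \<noteq> F R"
    using limit_ne_imp_nonconstant[where F = F and Rs = Rs, OF lim that] above Rs unfolding preceq_def by metis
  ultimately have "indiff R L (F R)" by (rule indiff_limit_from_above[OF D R z L le])
  then show ?thesis using lim by blast
qed

theorem mainTheorem7:
  fixes D :: "pref set" and F :: "pref \<Rightarrow> bndl"
  assumes "rich_single_crossing D"
    and "\<forall>R\<in>D. F R \<in> ZZ"
    and "strategy_proof D F"
  shows "monotone_mech D F \<and> VF_continuous D F \<and> locally_sp_in_range D F"
proof (intro conjI)
  show "monotone_mech D F"
    unfolding monotone_mech_def using strategy_proof_prec_bleq[OF assms] by blast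
  show "VF_continuous D F"
    unfolding VF_continuous_def
  proof (intro ballI allI impI)
    fix R Rs
    assume R: "R \<in> D" and Rs: "\<forall>n. Rs n \<in> D" and oc: "order_conv D Rs R"
      and "(\<forall>n. preceq (Rs n) (Rs (Suc n))) \<or> (\<forall>n. preceq (Rs (Suc n)) (Rs n))"
    then show "\<exists>L. (\<lambda>n. F (Rs n)) \<longlonglongrightarrow> L \<and> indiff R L (F R)"
      using strategy_proof_continuous_inc[OF assms R Rs _ oc]
        strategy_proof_continuous_dec[OF assms R Rs _ oc] by blast
  qed
  show "locally_sp_in_range D F"
    unfolding locally_sp_in_range_def
    using strategy_proof_ordered_range[OF assms] strategy_proofD[OF assms(3)] by auto
qed

end
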